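(* Let $A$ and $B$ be C$^*$-algebras, where $A$ is unital, simple and infinite. Let $T:A\to B$ be a linear map. Then $T$ is a $^*$-homomorphism if and only if $T$ is a $^*$-homomorphism at the unit $1$ of $A$.
   Context: A map $T:A\to B$ between C$^*$-algebras is a $^*$-homomorphism at $z\in A$ if for all $a,b\in A$ with $ab^*=z$ one has $T(ab^* )=T(a)T(b)^*=T(z)$, and for all $c,d\in A$ with $c^*d=z$ one has $T(c^*d)=T(c)^*T(d)=T(z)$. A unital C$^*$-algebra is infinite if its unit is not a finite projection (equivalently, it contains a projection that is Murray–von Neumann equivalent to a proper subprojection of itself). Simple means $A$ has no nontrivial norm-closed two-sided ideals. *)

theory Defs
  imports "HOL-Analysis.Analysis"
begin

text \<open>The real scalar multiplication
inherited from real_normed_algebra is required to agree with the complex one.\<close>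

class cstar_algebra = real_normed_algebra + banach +
  fixes scaleC :: "complex \<Rightarrow> 'a \<Rightarrow> 'a"
    and cstar :: "'a \<Rightarrow> 'a"
  assumes scaleC_add_right: "scaleC c (x + y) = scaleC c x + scaleC c y"
    and scaleC_add_left: "scaleC (c + d) x = scaleC c x + scaleC d x"
    and scaleC_scaleC: "scaleC c (scaleC d x) = scaleC (c * d) x"
    and scaleC_one: "scaleC 1 x = x"
    and scaleR_scaleC: "scaleR r x = scaleC (complex_of_real r) x"
    and norm_scaleC: "norm (scaleC c x) = cmod c * norm x"
    and scaleC_mult_left: "scaleC c (x * y) = scaleC c x * y"
    and scaleC_mult_right: "scaleC c (x * y) = x * scaleC c y"
    and cstar_cstar: "cstar (cstar x) = x"
    and cstar_add: "cstar (x + y) = cstar x + cstar y"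
    and cstar_scaleC: "cstar (scaleC c x) = scaleC (cnj c) (cstar x)"
    and cstar_mult: "cstar (x * y) = cstar y * cstar x"
    and cstar_identity: "norm (cstar x * x) = (norm x)^2"

class cstar_algebra_1 = cstar_algebra + real_normed_algebra_1

definition clinear_map :: "('a::cstar_algebra \<Rightarrow> 'b::cstar_algebra) \<Rightarrow> bool" where
  "clinear_map T \<longleftrightarrow> (\<forall>x y. T (x + y) = T x + T y) \<and> (\<forall>c x. T (scaleC c x) = scaleC c (T x))"

definition star_hom :: "('a::cstar_algebra \<Rightarrow> 'b::cstar_algebra) \<Rightarrow> bool" where
  "star_hom T \<longleftrightarrow> clinear_map T \<and> (\<forall>x y. T (x * y) = T x * T y) \<and> (\<forall>x. T (cstar x) = cstar (T x))"

definition star_hom_at :: "('a::cstar_algebra \<Rightarrow> 'b::cstar_algebra) \<Rightarrow> 'a \<Rightarrow> bool" where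
  "star_hom_at T z \<longleftrightarrow>
     (\<forall>a b. a * cstar b = z \<longrightarrow> T (a * cstar b) = T a * cstar (T b) \<and> T a * cstar (T b) = T z) \<and>
     (\<forall>c d. cstar c * d = z \<longrightarrow> T (cstar c * d) = cstar (T c) * T d \<and> cstar (T c) * T d = T z)"

definition closed_ideal :: "'a::cstar_algebra set \<Rightarrow> bool" where
  "closed_ideal I \<longleftrightarrow> 0 \<in> I \<and> (\<forall>x\<in>I. \<forall>y\<in>I. x + y \<in> I) \<and> (\<forall>c. \<forall>x\<in>I. scaleC c x \<in> I)
     \<and> (\<forall>a. \<forall>x\<in>I. a * x \<in> I \<and> x * a \<in> I) \<and> closed I"

definition cstar_simple :: "'a::cstar_algebra itself \<Rightarrow> bool" where
  "cstar_simple _ \<longleftrightarrow> (\<forall>I::'a set. closed_ideal I \<longrightarrow> I = {0} \<or> I = UNIV)"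

definition projection :: "'a::cstar_algebra \<Rightarrow> bool" where
  "projection p \<longleftrightarrow> p * p = p \<and> cstar p = p"

definition mvn_equiv :: "'a::cstar_algebra \<Rightarrow> 'a \<Rightarrow> bool" where
  "mvn_equiv p q \<longleftrightarrow> (\<exists>v. cstar v * v = p \<and> v * cstar v = q)"

definition subprojection :: "'a::cstar_algebra \<Rightarrow> 'a \<Rightarrow> bool" where
  "subprojection q p \<longleftrightarrow> projection q \<and> projection p \<and> q * p = q"

definition finite_projection :: "'a::cstar_algebra \<Rightarrow> bool" where
  "finite_projection p \<longleftrightarrow> projection p \<and>
     (\<forall>q. subprojection q p \<and> mvn_equiv p q \<longrightarrow> q = p)"

definition cstar_infinite :: "'a::cstar_algebra_1 itself \<Rightarrow> bool" where
  "cstar_infinite _ \<longleftrightarrow> \<not> finite_projection (1::'a)"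

end

theory Submission
  imports Defs
begin

text \<open>If \<open>T\<close> is a \<open>*\<close>-homomorphism at \<open>1\<close>, the biadditive forms
\<open>(x, y) \<mapsto> T(x) T(y\<^sup>*)\<^sup>*\<close> and \<open>(x, y) \<mapsto> T(x\<^sup>*)\<^sup>* T(y)\<close> take the
constant value \<open>T 1\<close> on all factorizations \<open>a b = 1\<close> of the unit. In a unital ring containing one-sided inverse pairs
\<open>u\<^sub>1 v\<^sub>1 = u\<^sub>2 v\<^sub>2 = 1\<close> with \<open>u\<^sub>1 v\<^sub>2 = u\<^sub>2 v\<^sub>1 = 0\<close>, perturbing such factorizations by
annihilating elements shows that every such form satisfies \<open>B x y = B (x y) 1\<close>.
A simple infinite C*-algebra contains such pairs: a proper isometry \<open>s\<close> gives the nonzero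
projection \<open>p = 1 - s s\<^sup>*\<close>; by simplicity the ideal generated by \<open>p\<close> is dense, so it contains
an element with a right inverse and hence \<open>1\<close>; writing \<open>1 = X Y\<close> with \<open>X s\<^sup>n = 0 = (s\<^sup>*)\<^sup>n Y\<close>
yields the pairs \<open>((s\<^sup>*)\<^sup>n, s\<^sup>n)\<close> and \<open>(X, Y)\<close>. Finally, the two resulting identities and the
C*-identity force \<open>T 1\<close> to be a projection acting as a unit on the range of \<open>T\<close>, from which
multiplicativity and \<open>*\<close>-preservation follow.\<close>

locale unit_factorization_form =
  fixes B :: "'a::ring_1 \<Rightarrow> 'a \<Rightarrow> 'b::real_vector" and k :: 'b
  assumes add_left: "B (x + x') y = B x y + B x' y"
    and add_right: "B x (y + y') = B x y + B x y'"
    and unit_factorization: "a * b = 1 \<Longrightarrow> B a b = k"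
begin

lemma diff_left: "B (x - x') y = B x y - B x' y"
  by (rule additive.diff) (simp add: additive.intro add_left)

lemma diff_right: "B x (y - y') = B x y - B x y'"
  by (rule additive.diff) (simp add: additive.intro add_right)

lemma zero_left: "B 0 y = 0"
  using diff_left[of 0 0 y] by simp

lemma zero_right: "B x 0 = 0"
  using diff_right[of x 0 0] by simp

lemma perturbation:
  assumes "a * b = 1" and "X * b + a * Y + X * Y = 0"
  shows "B X b + B a Y + B X Y = 0"
proof -
  have "(a + X) * (b + Y) = 1" using assms by (simp add: algebra_simps)
  hence "B (a + X) (b + Y) = B a b" using assms(1) by (simp add: unit_factorization)
  thus ?thesis by (simp add: add_left add_right algebra_simps)
qed

lemma zero_left_if_annihilates: "a * b = 1 \<Longrightarrow> X * b = 0 \<Longrightarrow> B X b = 0"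
  using perturbation[of a b X 0] by (simp add: zero_right)

lemma zero_right_if_annihilated: "a * b = 1 \<Longrightarrow> a * Y = 0 \<Longrightarrow> B a Y = 0"
  using perturbation[of a b 0 Y] by (simp add: zero_left)

lemma annihilator_shift:
  assumes ab: "a * b = 1" and Xb: "X * b = 0" and aY: "a * Y = 0"
  shows "B X Y = B (X * Y * a) b" and "B (X * Y * a) Y = 0"
proof -
  define W where "W = X * Y * a"
  \<comment> \<open>makes \<open>(a + X - W) (b + Y)\<close> and \<open>(a + X + W) (b - Y)\<close> factorizations of \<open>1\<close>\<close>
  have Wb: "W * b = X * Y" and WY: "W * Y = 0"
    by (simp_all add: W_def ab aY mult.assoc)
  have "B (X - W) b + B a Y + B (X - W) Y = 0"
    by (rule perturbation[OF ab]) (simp add: Xb aY Wb WY algebra_simps)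
  hence minus: "B X Y - B W b - B W Y = 0"
    using zero_left_if_annihilates[OF ab Xb] zero_right_if_annihilated[OF ab aY]
    by (simp add: diff_left algebra_simps)
  have "B (X + W) b + B a (- Y) + B (X + W) (- Y) = 0"
    by (rule perturbation[OF ab]) (simp add: Xb aY Wb WY algebra_simps)
  hence plus: "B W b - B X Y - B W Y = 0"
    using zero_left_if_annihilates[OF ab Xb] zero_right_if_annihilated[OF ab aY]
    by (simp add: add_left diff_right[of _ 0, simplified] zero_right algebra_simps)
  have "- (2 *\<^sub>R B W Y) = (B X Y - B W b - B W Y) + (B W b - B X Y - B W Y)"
    by (simp add: scaleR_2 algebra_simps)
  hence "B W Y = 0" by (simp add: minus plus)
  with minus show "B X Y = B (X * Y * a) b" and "B (X * Y * a) Y = 0"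
    by (simp_all add: W_def)
qed

context
  fixes u1 v1 u2 v2 :: 'a
  assumes u1v1: "u1 * v1 = 1" and u2v2: "u2 * v2 = 1" and u1v2: "u1 * v2 = 0" and u2v1: "u2 * v1 = 0"
begin

lemma shift_via_second_pair: "B (x * u2) (v2 * y) = B (x * y * u1) v1"
proof -
  have "x * u2 * v1 = 0" by (simp add: mult.assoc u2v1)
  moreover have "u1 * (v2 * y) = 0" by (simp add: u1v2 flip: mult.assoc)
  ultimately have "B (x * u2) (v2 * y) = B (x * u2 * (v2 * y) * u1) v1"
    by (rule annihilator_shift(1)[OF u1v1])
  also have "x * u2 * (v2 * y) = x * y"
    by (metis mult.assoc mult.right_neutral u2v2)
  finally show ?thesis .
qed

lemma vanishes_on_crossed_pairs: "B (w * u2) (v1 * z) = 0"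
proof -
  have diagonal: "B (w * y * u2) (v1 * y) = 0" for y
  proof -
    have "w * u1 * v2 = 0" by (simp add: mult.assoc u1v2)
    moreover have "u2 * (v1 * y) = 0" by (simp add: u2v1 flip: mult.assoc)
    ultimately have "B (w * u1 * (v1 * y) * u2) (v1 * y) = 0"
      by (rule annihilator_shift(2)[OF u2v2])
    moreover have "w * u1 * (v1 * y) = w * y"
      by (metis mult.assoc mult.right_neutral u1v1)
    ultimately show ?thesis by simp
  qed
  \<comment> \<open>polarize \<open>diagonal\<close> at \<open>1 + z\<close>\<close>
  have "w * z * u2 * v1 = 0" by (simp add: mult.assoc u2v1)
  hence "B (w * z * u2) v1 = 0" by (rule zero_left_if_annihilates[OF u1v1])
  moreover have "B (w * (1 + z) * u2) (v1 * (1 + z)) = 0" by (rule diagonal)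
  ultimately show ?thesis
    using diagonal[of 1] diagonal[of z] by (simp add: algebra_simps add_left add_right)
qed

lemma vanishes_if_annihilates_first:
  assumes "X * v1 = 0" shows "B X (v1 * z) = 0"
proof -
  define X' where "X' = X - X * v2 * u2"
  have X'v1: "X' * v1 = 0" and X'v2: "X' * v2 = 0"
    by (simp_all add: X'_def assms u2v1 u2v2 algebra_simps mult.assoc)
  have "u2 * (v2 + v1 * z) = 1" by (simp add: distrib_left u2v2 u2v1 flip: mult.assoc)
  moreover have "X' * (v2 + v1 * z) = 0" by (simp add: distrib_left X'v1 X'v2 flip: mult.assoc)
  ultimately have "B X' (v2 + v1 * z) = 0" by (rule zero_left_if_annihilates)
  hence "B X' (v1 * z) = 0"
    using zero_left_if_annihilates[OF u2v2 X'v2] by (simp add: add_right)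
  moreover have "B X (v1 * z) = B X' (v1 * z) + B (X * v2 * u2) (v1 * z)"
    by (simp add: X'_def diff_left)
  ultimately show ?thesis
    using vanishes_on_crossed_pairs[of "X * v2" z] by simp
qed

end

text \<open>The lemmas above are needed with the two pairs exchanged, hence a fresh context.\<close>

context
  fixes u1 v1 u2 v2 :: 'a
  assumes u1v1: "u1 * v1 = 1" and u2v2: "u2 * v2 = 1" and u1v2: "u1 * v2 = 0" and u2v1: "u2 * v1 = 0"
begin

lemma shift_via_first_pair: "B (x * u1) (v1 * y) = B (x * y * u1) v1"
  using shift_via_second_pair[OF u2v2 u1v1 u2v1 u1v2, of x y]
    shift_via_second_pair[OF u1v1 u2v2 u1v2 u2v1, of "x * y" 1]
  by simp

lemma vanishes_if_annihilated_by_first: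
  assumes "u1 * Y = 0" shows "B (w * u1) Y = 0"
proof -
  define Y' where "Y' = Y - v2 * (u2 * Y)"
  have u1Y': "u1 * Y' = 0" and u2Y': "u2 * Y' = 0"
    by (simp_all add: Y'_def assms right_diff_distrib u1v2 u2v2 flip: mult.assoc)
  have "(u2 + w * u1) * v2 = 1" by (simp add: distrib_right u2v2 u1v2 mult.assoc)
  moreover have "(u2 + w * u1) * Y' = 0" by (simp add: distrib_right u1Y' u2Y' mult.assoc)
  ultimately have "B (u2 + w * u1) Y' = 0" by (rule zero_right_if_annihilated)
  hence "B (w * u1) Y' = 0"
    using zero_right_if_annihilated[OF u2v2 u2Y'] by (simp add: add_left)
  moreover have "B (w * u1) Y = B (w * u1) Y' + B (w * u1) (v2 * (u2 * Y))"
    by (simp add: Y'_def diff_right)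
  ultimately show ?thesis
    using vanishes_on_crossed_pairs[OF u2v2 u1v1 u2v1 u1v2, of w "u2 * Y"] by simp
qed

lemma shift_to_first_pair: "B x y = B (x * y * u1) v1"
proof -
  define f where "f = 1 - v1 * u1"
  have fv1: "f * v1 = 0" by (simp add: f_def left_diff_distrib mult.assoc u1v1)
  have u1f: "u1 * f = 0" by (simp add: f_def right_diff_distrib u1v1 flip: mult.assoc)
  have "f * f = f * 1 - f * v1 * u1"
    by (metis f_def mult.assoc right_diff_distrib)
  hence ff: "f * f = f" by (simp add: fv1)
  have u1fy: "u1 * (f * y) = 0" by (simp add: u1f flip: mult.assoc)
  have "x * f * v1 = 0" by (simp add: fv1 mult.assoc)
  from this u1fy have "B (x * f) (f * y) = B (x * f * (f * y) * u1) v1"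
    by (rule annihilator_shift(1)[OF u1v1])
  also have "x * f * (f * y) = x * f * y" by (metis ff mult.assoc)
  finally have ff_part: "B (x * f) (f * y) = B (x * f * y * u1) v1" .
  have "B x y = B (x * f + x * v1 * u1) (f * y + v1 * (u1 * y))"
    by (simp add: f_def algebra_simps)
  also have "\<dots> = B (x * f) (f * y) + B (x * f) (v1 * (u1 * y))
      + B (x * v1 * u1) (f * y) + B (x * v1 * u1) (v1 * (u1 * y))"
    by (simp add: add_left add_right)
  also have "\<dots> = B (x * f * y * u1) v1 + B (x * v1 * (u1 * y) * u1) v1"
    using ff_part vanishes_if_annihilates_first[OF u1v1 u2v2 u1v2 u2v1, of "x * f"]
      vanishes_if_annihilated_by_first[of "f * y" "x * v1"] shift_via_first_pair[of "x * v1" "u1 * y"]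
    by (simp add: fv1 u1fy mult.assoc)
  also have "\<dots> = B (x * y * u1) v1"
    by (simp add: f_def algebra_simps flip: add_left)
  finally show ?thesis .
qed

lemma shift_to_one: "B x y = B (x * y) 1"
  using shift_to_first_pair[of x y] shift_to_first_pair[of "x * y" 1] by simp

end

end

inductive_set principal_ideal :: "'a::ring_1 \<Rightarrow> 'a set" for p :: 'a where
  generator: "x * p * y \<in> principal_ideal p"
| add: "a \<in> principal_ideal p \<Longrightarrow> b \<in> principal_ideal p \<Longrightarrow> a + b \<in> principal_ideal p"

lemma principal_ideal_zero: "0 \<in> principal_ideal p"
  using principal_ideal.generator[of 0 p 0] by simp

lemma principal_ideal_mult_left: "x \<in> principal_ideal p \<Longrightarrow> a * x \<in> principal_ideal p"
  by (induction rule: principal_ideal.induct)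
    (metis principal_ideal.generator mult.assoc, simp add: distrib_left principal_ideal.add)

lemma principal_ideal_mult_right: "x \<in> principal_ideal p \<Longrightarrow> x * a \<in> principal_ideal p"
  by (induction rule: principal_ideal.induct)
    (metis principal_ideal.generator mult.assoc, simp add: distrib_right principal_ideal.add)

lemma principal_ideal_scaleC:
  "(x::'a::cstar_algebra_1) \<in> principal_ideal p \<Longrightarrow> scaleC c x \<in> principal_ideal p"
  by (induction rule: principal_ideal.induct)
    (auto simp: scaleC_add_right scaleC_mult_left intro: principal_ideal.intros)

lemma left_inverse_power: "t * s = 1 \<Longrightarrow> t ^ n * s ^ n = (1::'a::ring_1)"
proof (induction n)
  case (Suc n)
  have "t ^ Suc n * s ^ Suc n = t ^ n * (t * s) * s ^ n"
    by (simp only: power_Suc2[of t] power_Suc[of s] mult.assoc)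
  with Suc show ?case by simp
qed simp

lemma principal_ideal_factorization:
  fixes s t :: "'a::ring_1"
  assumes ts: "t * s = 1"
  shows "x \<in> principal_ideal (1 - s * t) \<Longrightarrow> \<exists>n X Y. X * Y = x \<and> X * s ^ n = 0 \<and> t ^ n * Y = 0"
proof (induction rule: principal_ideal.induct)
  case (generator x y)
  define p where "p = 1 - s * t"
  have "p * s = 0" by (simp add: p_def ts left_diff_distrib mult.assoc)
  moreover have "t * p = 0" by (simp add: p_def ts right_diff_distrib flip: mult.assoc)
  moreover have "p * p = p * 1 - p * s * t"
    by (metis p_def right_diff_distrib mult.assoc)
  ultimately have "x * p * (p * y) = x * p * y" and "x * p * s ^ 1 = 0" and "t ^ 1 * (p * y) = 0"
    by (simp_all add: mult.assoc flip: mult.assoc[of t] mult.assoc[of p p])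
  thus ?case unfolding p_def by blast
next
  case (add a b)
  obtain m X Y where a: "X * Y = a" "X * s ^ m = 0" "t ^ m * Y = 0" using add.IH(1) by blast
  obtain n X' Y' where b: "X' * Y' = b" "X' * s ^ n = 0" "t ^ n * Y' = 0" using add.IH(2) by blast
  have tsm: "t ^ m * s ^ m = 1" by (rule left_inverse_power[OF ts])
  have "(X + X' * t ^ m) * (Y + s ^ m * Y')
        = X * Y + (X * s ^ m) * Y' + X' * (t ^ m * Y) + X' * (t ^ m * s ^ m) * Y'"
    by (simp add: algebra_simps)
  hence "(X + X' * t ^ m) * (Y + s ^ m * Y') = a + b"
    using a b tsm by simp
  moreover have "(X + X' * t ^ m) * s ^ (m + n) = (X * s ^ m) * s ^ n + X' * (t ^ m * s ^ m) * s ^ n"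
    by (simp add: power_add algebra_simps)
  hence "(X + X' * t ^ m) * s ^ (m + n) = 0"
    using a b tsm by simp
  moreover have "t ^ (m + n) = t ^ n * t ^ m"
    by (metis power_add add.commute)
  hence "t ^ (m + n) * (Y + s ^ m * Y') = t ^ n * (t ^ m * Y) + t ^ n * (t ^ m * s ^ m) * Y'"
    by (simp add: algebra_simps)
  hence "t ^ (m + n) * (Y + s ^ m * Y') = 0"
    using a b tsm by simp
  ultimately show ?case by blast
qed

lemma orthogonal_pairs_of_isometry:
  fixes s t :: "'a::ring_1"
  assumes ts: "t * s = 1" and "1 \<in> principal_ideal (1 - s * t)"
  shows "\<exists>u1 v1 u2 v2 :: 'a. u1 * v1 = 1 \<and> u2 * v2 = 1 \<and> u1 * v2 = 0 \<and> u2 * v1 = 0"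
proof -
  obtain n X Y where "X * Y = 1" "X * s ^ n = 0" "t ^ n * Y = 0"
    using principal_ideal_factorization[OF assms] by blast
  with left_inverse_power[OF ts, of n] show ?thesis by blast
qed

lemma closure_invariant:
  assumes "continuous_on UNIV f" and "f ` S \<subseteq> S"
  shows "f ` closure S \<subseteq> closure S"
  using assms closure_subset
  by (intro image_closure_subset) (auto intro: continuous_on_subset)

lemma bounded_linear_scaleC: "bounded_linear (scaleC c :: 'a::cstar_algebra \<Rightarrow> 'a)"
proof (rule bounded_linear_intro[where K = "cmod c"])
  fix r and x :: 'a
  show "scaleC c (scaleR r x) = scaleR r (scaleC c x)"
    by (simp add: scaleR_scaleC scaleC_scaleC mult.commute)
qed (simp_all add: scaleC_add_right norm_scaleC mult.commute)

lemma closed_ideal_closure: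
  fixes I :: "'a::cstar_algebra set"
  assumes "0 \<in> I" and "\<And>x y. x \<in> I \<Longrightarrow> y \<in> I \<Longrightarrow> x + y \<in> I"
    and "\<And>c x. x \<in> I \<Longrightarrow> scaleC c x \<in> I"
    and "\<And>a x. x \<in> I \<Longrightarrow> a * x \<in> I" and "\<And>a x. x \<in> I \<Longrightarrow> x * a \<in> I"
  shows "closed_ideal (closure I)"
proof -
  have "x + y \<in> closure I" if "x \<in> closure I" and "y \<in> closure I" for x y
    using that closure_sum[of I I] closure_mono[of "I + I" I] assms(2)
    by (auto simp: set_plus_def)
  moreover have "scaleC c x \<in> closure I" if "x \<in> closure I" for c x
    using that assms(3) closure_invariant[of "scaleC c" I]
    by (auto intro: linear_continuous_on bounded_linear_scaleC)
  moreover have "(\<lambda>x. a * x) ` closure I \<subseteq> closure I" for a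
    by (rule closure_invariant) (use assms(4) in \<open>auto intro!: continuous_intros\<close>)
  moreover have "(\<lambda>x. x * a) ` closure I \<subseteq> closure I" for a
    by (rule closure_invariant) (use assms(5) in \<open>auto intro!: continuous_intros\<close>)
  ultimately show ?thesis
    using assms(1) closure_subset unfolding closed_ideal_def image_subset_iff by blast
qed

lemma right_inverse_if_near_one:
  fixes j :: "'a::{real_normed_algebra_1,banach}"
  assumes "norm (1 - j) < 1"
  shows "\<exists>g. j * g = 1"
proof -
  define r where "r = 1 - j"
  have sm: "summable (\<lambda>n. r ^ n)"
    using assms by (simp add: r_def complete_algebra_summable_geometric)
  define g where "g = (\<Sum>n. r ^ n)"
  have "r * g = (\<Sum>n. r ^ Suc n)"
    unfolding g_def using suminf_mult[OF sm] by simp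
  also have "\<dots> = g - 1"
    unfolding g_def using suminf_split_head[OF sm] by simp
  finally have "j * g = 1" by (simp add: r_def left_diff_distrib)
  thus ?thesis by blast
qed

lemma one_in_principal_ideal_if_simple:
  assumes "cstar_simple TYPE('a::cstar_algebra_1)" and "(p::'a) \<noteq> 0"
  shows "1 \<in> principal_ideal p"
proof -
  have "closed_ideal (closure (principal_ideal p))"
    by (intro closed_ideal_closure principal_ideal_zero principal_ideal.add principal_ideal_scaleC
        principal_ideal_mult_left principal_ideal_mult_right)
  moreover have "p \<in> closure (principal_ideal p)"
    using principal_ideal.generator[of 1 p 1] closure_subset by auto
  ultimately have "closure (principal_ideal p) = UNIV"
    using assms unfolding cstar_simple_def by blast
  hence "1 \<in> closure (principal_ideal p)" by simp
  hence "\<forall>\<epsilon>>0. \<exists>j\<in>principal_ideal p. dist j 1 < \<epsilon>"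
    by (simp only: closure_approachable)
  then obtain j where j: "j \<in> principal_ideal p" and "dist j 1 < 1"
    using zero_less_one by blast
  hence "norm (1 - j) < 1" by (simp add: dist_norm norm_minus_commute)
  then obtain g where "j * g = 1" using right_inverse_if_near_one by blast
  thus ?thesis using principal_ideal_mult_right[OF j, of g] by simp
qed

interpretation cstar: additive "cstar :: 'a::cstar_algebra \<Rightarrow> 'a"
  by standard (rule cstar_add)

lemma cstar_one [simp]: "cstar (1::'a::cstar_algebra_1) = 1"
  by (metis cstar_cstar cstar_mult mult.left_neutral mult.right_neutral)

lemma proper_isometry_if_infinite:
  assumes "cstar_infinite TYPE('a::cstar_algebra_1)"
  shows "\<exists>s::'a. cstar s * s = 1 \<and> s * cstar s \<noteq> 1"
proof -
  have "projection (1::'a)" by (simp add: projection_def)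
  with assms obtain q :: 'a where "mvn_equiv 1 q" and "q \<noteq> 1"
    unfolding cstar_infinite_def finite_projection_def by blast
  thus ?thesis unfolding mvn_equiv_def by blast
qed

lemma orthogonal_pairs_if_simple_infinite:
  assumes "cstar_simple TYPE('a::cstar_algebra_1)" and "cstar_infinite TYPE('a)"
  shows "\<exists>u1 v1 u2 v2 :: 'a. u1 * v1 = 1 \<and> u2 * v2 = 1 \<and> u1 * v2 = 0 \<and> u2 * v1 = 0"
proof -
  obtain s :: 'a where isometry: "cstar s * s = 1" and "s * cstar s \<noteq> 1"
    using proper_isometry_if_infinite[OF assms(2)] by blast
  hence "1 \<in> principal_ideal (1 - s * cstar s)"
    by (intro one_in_principal_ideal_if_simple[OF assms(1)]) simp
  with isometry show ?thesis by (rule orthogonal_pairs_of_isometry)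
qed

lemma cstar_mult_self_eq_zero: "cstar x * x = 0 \<Longrightarrow> x = (0::'a::cstar_algebra)"
  using cstar_identity[of x] by simp

lemma projection_if_mult_cstar_self:
  assumes "h * cstar h = (h::'a::cstar_algebra)"
  shows "projection h"
proof -
  have "cstar h = h * cstar h" by (metis assms cstar_cstar cstar_mult)
  with assms show ?thesis unfolding projection_def by simp
qed

lemma mult_projection_eq_self:
  assumes "projection h" and "cstar a * a = h * w"
  shows "a * h = (a::'a::cstar_algebra)"
proof -
  have hh: "h * h = h" and hs: "cstar h = h" using assms(1) unfolding projection_def by auto
  have "cstar (a - a * h) * (a - a * h)
        = cstar a * a - cstar a * a * h - h * (cstar a * a) + h * (cstar a * a) * h"
    by (simp add: cstar.diff cstar_mult hs algebra_simps)
  also have "\<dots> = h * w - h * w * h - (h * h) * w + (h * h) * w * h"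
    by (simp add: assms(2) mult.assoc)
  also have "\<dots> = 0" by (simp add: hh)
  finally show ?thesis using cstar_mult_self_eq_zero by fastforce
qed

lemma star_hom_if_shift_identities:
  fixes T :: "'a::cstar_algebra_1 \<Rightarrow> 'b::cstar_algebra"
  defines "T' \<equiv> \<lambda>x. cstar (T (cstar x))"
  assumes linear: "clinear_map T"
    and right: "\<And>x y. T x * T' y = T (x * y) * T' 1"
    and left: "\<And>x y. T' x * T y = T' (x * y) * T 1"
    and "T 1 * T' 1 = T 1"
  shows "star_hom T"
proof -
  define h where "h = T 1"
  have proj: "projection h"
    using assms(5) by (intro projection_if_mult_cstar_self) (simp add: T'_def h_def)
  hence T'1: "T' 1 = h" by (simp add: T'_def h_def projection_def)
  have T'_cstar: "T' (cstar x) = cstar (T x)" for x by (simp add: T'_def cstar_cstar)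
  have right_one: "h * T' y = T y * h" for y using right[of 1 y] T'1 by (simp add: h_def)
  have left': "T' x * T y = h * T (x * y)" for x y
    using left[of x y] left[of 1 "x * y"] T'1 by (simp add: h_def)
  have Th: "T x * h = T x" for x
    using mult_projection_eq_self[OF proj] left'[of "cstar x" x] by (simp add: T'_cstar)
  have T'_eq: "T' y = T y" for y
  proof -
    have "T' y = cstar (T (cstar y) * h)" by (simp add: T'_def Th)
    also have "\<dots> = h * T' y" using proj by (simp add: T'_def cstar_mult projection_def)
    finally show ?thesis by (simp add: right_one Th)
  qed
  have "T (x * y) = T x * T y" for x y using right[of x y] unfolding T'1 by (simp add: T'_eq Th)
  moreover have "T (cstar x) = cstar (T x)" for x using T'_cstar[of x] by (simp add: T'_eq)
  ultimately show ?thesis using linear unfolding star_hom_def by blast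
qed

lemma unit_factorization_forms_if_star_hom_at_one:
  fixes T :: "'a::cstar_algebra_1 \<Rightarrow> 'b::cstar_algebra"
  assumes "clinear_map T" and "star_hom_at T 1"
  shows "unit_factorization_form (\<lambda>x y. T x * cstar (T (cstar y))) (T 1)"
    and "unit_factorization_form (\<lambda>x y. cstar (T (cstar x)) * T y) (T 1)"
proof -
  have add: "T (x + y) = T x + T y" for x y
    using assms(1) unfolding clinear_map_def by blast
  show "unit_factorization_form (\<lambda>x y. T x * cstar (T (cstar y))) (T 1)"
  proof
    fix a b :: 'a assume "a * b = 1"
    hence "a * cstar (cstar b) = 1" by (simp add: cstar_cstar)
    thus "T a * cstar (T (cstar b)) = T 1"
      using assms(2) unfolding star_hom_at_def by blast
  qed (simp_all add: add cstar.add distrib_left distrib_right)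
  show "unit_factorization_form (\<lambda>x y. cstar (T (cstar x)) * T y) (T 1)"
  proof
    fix a b :: 'a assume "a * b = 1"
    hence "cstar (cstar a) * b = 1" by (simp add: cstar_cstar)
    thus "cstar (T (cstar a)) * T b = T 1"
      using assms(2) unfolding star_hom_at_def by blast
  qed (simp_all add: add cstar.add distrib_left distrib_right)
qed

theorem theorem2p8:
  fixes T :: "'a::cstar_algebra_1 \<Rightarrow> 'b::cstar_algebra"
  assumes "cstar_simple TYPE('a)"
    and "cstar_infinite TYPE('a)"
    and "clinear_map T"
  shows "star_hom T \<longleftrightarrow> star_hom_at T 1"
proof
  assume "star_hom T"
  thus "star_hom_at T 1" unfolding star_hom_def star_hom_at_def by metis
next
  assume "star_hom_at T 1"
  then interpret right: unit_factorization_form "\<lambda>x y. T x * cstar (T (cstar y))" "T 1"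
    + left: unit_factorization_form "\<lambda>x y. cstar (T (cstar x)) * T y" "T 1"
    using unit_factorization_forms_if_star_hom_at_one[OF assms(3)] by auto
  obtain u1 v1 u2 v2 :: 'a where pairs: "u1 * v1 = 1" "u2 * v2 = 1" "u1 * v2 = 0" "u2 * v1 = 0"
    using orthogonal_pairs_if_simple_infinite[OF assms(1,2)] by blast
  show "star_hom T"
  proof (rule star_hom_if_shift_identities[OF assms(3)])
    show "T x * cstar (T (cstar y)) = T (x * y) * cstar (T (cstar 1))" for x y
      by (rule right.shift_to_one[OF pairs])
    show "cstar (T (cstar x)) * T y = cstar (T (cstar (x * y))) * T 1" for x y
      by (rule left.shift_to_one[OF pairs, simplified mult_1_right])
    show "T 1 * cstar (T (cstar 1)) = T 1"
      by (rule right.unit_factorization) simp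
  qed
qed

end
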